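(* Let $V$ be a vector space over a field $\mathbb F$, and let $\mathcal S=\{\tau^1,\tau^2,\tau^3,\dots\}\subset\mathcal T(V^* )$ contain exactly one symmetric tensor $\tau^n\in\odot^nV^*$ for each $n\in\mathbb N$. Then the permutation invariant subalgebra generated by $\mathcal S$ equals $$\mathcal A_{\mathrm{perm}}(\mathcal S)=\mathbb F\oplus\bigoplus_{n=1}^\infty\operatorname{span}\{\tau^{\mathbf P}:\mathbf P\in\mathbf{Part}(n)\}.$$
   Context: $\mathcal T(V^* )=\bigoplus_{n\ge0}\otimes^nV^*$, where $\otimes^nV^*$ is the space of $n$-multilinear forms $V^n\to\mathbb F$ ($\otimes^0V^*=\mathbb F$), with product $(\tau\otimes\tau')(v_1,\dots,v_{n+m})=\tau(v_1,\dots,v_n)\tau'(v_{n+1},\dots,v_{n+m})$ (scalars act by scalar multiplication). $S_n$ acts on $\otimes^nV^*$ by $(P_\sigma\tau)(v_1,\dots,v_n)=\tau(v_{\sigma^{-1}(1)},\dots,v_{\sigma^{-1}(n)})$; $\odot^nV^*$ is the subspace of tensors fixed by all $P_\sigma$. A unital subalgebra is a linear subspace containing $\mathbb F$ and closed under $\otimes$; it is graded if it is the direct sum of its intersections $\mathcal A_n$ with the $\otimes^nV^*$, and permutation invariant if it is graded and each $\mathcal A_n$ is preserved by $S_n$. $\mathcal A_{\mathrm{perm}}(\mathcal S)$ is the intersection of all permutation invariant unital subalgebras containing $\mathcal S$. $\mathbf{Part}(n)$ is the set of partitions $\mathbf P=\{P_1,\dots,P_r\}$ of $\{1,\dots,n\}$;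 for such $\mathbf P$ with $n_i=|P_i|$, $\tau^{\mathbf P}(v_1,\dots,v_n)=\prod_{i=1}^r\tau^{n_i}\big((v_j)_{j\in P_i}\big)$ (independent of the order within $P_i$ by symmetry). *)

theory Defs
  imports Complex_Main "HOL-Combinatorics.Permutations" "HOL-Library.Disjoint_Sets" "HOL-Library.Function_Algebras"
begin

text \<open>An element of the tensor algebra T(V*) is represented by its graded components:
  component n is a function on lists of vectors, an n-multilinear form on lists of
  length n and zero on lists of any other length.\<close>

type_synonym ('v, 'a) tensor = "nat \<Rightarrow> 'v list \<Rightarrow> 'a"

definition multilin :: "('a::field \<Rightarrow> 'v::ab_group_add \<Rightarrow> 'v) \<Rightarrow> nat \<Rightarrow> ('v list \<Rightarrow> 'a) \<Rightarrow> bool" where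
  "multilin scale n f \<longleftrightarrow>
     (\<forall>vs. length vs \<noteq> n \<longrightarrow> f vs = 0) \<and>
     (\<forall>vs i c x y. length vs = n \<longrightarrow> i < n \<longrightarrow>
        f (vs[i := scale c x + y]) = c * f (vs[i := x]) + f (vs[i := y]))"

definition tensor_alg :: "('a::field \<Rightarrow> 'v::ab_group_add \<Rightarrow> 'v) \<Rightarrow> ('v, 'a) tensor set" where
  "tensor_alg scale = {t. finite {n. t n \<noteq> 0} \<and> (\<forall>n. multilin scale n (t n))}"

definition hom_part :: "nat \<Rightarrow> ('v list \<Rightarrow> 'a::zero) \<Rightarrow> ('v, 'a) tensor" where
  "hom_part n f = (\<lambda>k. if k = n then f else 0)"

definition scalar_tensor :: "'a::zero \<Rightarrow> ('v, 'a) tensor" where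
  "scalar_tensor c = hom_part 0 (\<lambda>vs. if vs = [] then c else 0)"

definition tprod :: "('v, 'a::comm_ring_1) tensor \<Rightarrow> ('v, 'a) tensor \<Rightarrow> ('v, 'a) tensor" where
  "tprod t u = (\<lambda>k vs. if length vs = k
      then (\<Sum>i\<le>k. t i (take i vs) * u (k - i) (drop i vs)) else 0)"

definition perm_tensor :: "nat \<Rightarrow> (nat \<Rightarrow> nat) \<Rightarrow> ('v list \<Rightarrow> 'a::zero) \<Rightarrow> ('v list \<Rightarrow> 'a)" where
  "perm_tensor n \<sigma> f = (\<lambda>vs. if length vs = n
      then f (map (\<lambda>i. vs ! (inv \<sigma> i)) [0..<n]) else 0)"

definition symmetric_tensor :: "('a::field \<Rightarrow> 'v::ab_group_add \<Rightarrow> 'v) \<Rightarrow> nat \<Rightarrow> ('v list \<Rightarrow> 'a) \<Rightarrow> bool" where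
  "symmetric_tensor scale n f \<longleftrightarrow> multilin scale n f \<and>
     (\<forall>\<sigma>. \<sigma> permutes {..<n} \<longrightarrow> perm_tensor n \<sigma> f = f)"

definition unital_subalg :: "('a::field \<Rightarrow> 'v::ab_group_add \<Rightarrow> 'v) \<Rightarrow> ('v, 'a) tensor set \<Rightarrow> bool" where
  "unital_subalg scale A \<longleftrightarrow> A \<subseteq> tensor_alg scale \<and>
     (\<forall>c. scalar_tensor c \<in> A) \<and>
     (\<forall>t\<in>A. \<forall>u\<in>A. t + u \<in> A) \<and>
     (\<forall>c. \<forall>t\<in>A. (\<lambda>k vs. c * t k vs) \<in> A) \<and>
     (\<forall>t\<in>A. \<forall>u\<in>A. tprod t u \<in> A)"

text \<open>Graded: A is the direct sum of the A_n = A \<inter> (components of degree n), i.e. every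
  homogeneous component of an element of A lies in A.\<close>
definition graded_subalg :: "('a::field \<Rightarrow> 'v::ab_group_add \<Rightarrow> 'v) \<Rightarrow> ('v, 'a) tensor set \<Rightarrow> bool" where
  "graded_subalg scale A \<longleftrightarrow> unital_subalg scale A \<and>
     (\<forall>t\<in>A. \<forall>n. hom_part n (t n) \<in> A)"

definition perm_inv_subalg :: "('a::field \<Rightarrow> 'v::ab_group_add \<Rightarrow> 'v) \<Rightarrow> ('v, 'a) tensor set \<Rightarrow> bool" where
  "perm_inv_subalg scale A \<longleftrightarrow> graded_subalg scale A \<and>
     (\<forall>n f \<sigma>. hom_part n f \<in> A \<longrightarrow> \<sigma> permutes {..<n} \<longrightarrow> hom_part n (perm_tensor n \<sigma> f) \<in> A)"

definition A_perm :: "('a::field \<Rightarrow> 'v::ab_group_add \<Rightarrow> 'v) \<Rightarrow> ('v, 'a) tensor set \<Rightarrow> ('v, 'a) tensor set" where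
  "A_perm scale S = \<Inter>{A. perm_inv_subalg scale A \<and> S \<subseteq> A}"

definition part_tensor :: "('v, 'a::comm_ring_1) tensor \<Rightarrow> nat \<Rightarrow> nat set set \<Rightarrow> ('v list \<Rightarrow> 'a)" where
  "part_tensor \<tau> n P = (\<lambda>vs. if length vs = n
      then (\<Prod>B\<in>P. \<tau> (card B) (map (\<lambda>j. vs ! j) (sorted_list_of_set B))) else 0)"

definition fun_span :: "('v list \<Rightarrow> 'a::field) set \<Rightarrow> ('v list \<Rightarrow> 'a) set" where
  "fun_span X = module.span (\<lambda>c f. (\<lambda>x. c * f x)) X"

end

theory Submission
  imports Defs
begin

text \<open>
  Let \<open>R\<close> be the right-hand side. The tensor product of \<open>\<tau>^P\<close> and \<open>\<tau>^Q\<close> is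
  \<open>\<tau>^(P \<union> Q')\<close>, where \<open>Q'\<close> is \<open>Q\<close> shifted past the points of \<open>P\<close>, and since every
  \<open>\<tau>\<^sup>n\<close> is symmetric a permutation \<open>\<sigma>\<close> maps \<open>\<tau>^P\<close> to \<open>\<tau>^(\<sigma> P)\<close>. Hence \<open>R\<close> is a
  permutation invariant subalgebra containing the generators. Conversely, a permutation
  moving one block of \<open>P\<close>, of size \<open>m\<close>, to the end writes \<open>\<tau>^P\<close> as a permuted tensor
  product \<open>\<tau>^Q \<otimes> \<tau>\<^sup>m\<close> with \<open>Q\<close> a partition of fewer points, so by induction every \<open>\<tau>^P\<close>,
  and hence all of \<open>R\<close>, lies in every permutation invariant subalgebra containing the
  generators.
\<close>

lemma module_fun_scale: "module (\<lambda>c (f::'v list \<Rightarrow> 'a::field) x. c * f x)"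
  by unfold_locales (auto simp: fun_eq_iff algebra_simps)

lemma fun_span_zero: "0 \<in> fun_span X"
  unfolding fun_span_def by (rule module.span_zero[OF module_fun_scale])

lemma fun_span_base: "f \<in> X \<Longrightarrow> f \<in> fun_span X"
  unfolding fun_span_def by (rule module.span_base[OF module_fun_scale])

lemma fun_span_add: "f \<in> fun_span X \<Longrightarrow> g \<in> fun_span X \<Longrightarrow> f + g \<in> fun_span X"
  unfolding fun_span_def by (rule module.span_add[OF module_fun_scale])

lemma fun_span_scale: "f \<in> fun_span X \<Longrightarrow> (\<lambda>x. c * f x) \<in> fun_span X"
  unfolding fun_span_def by (rule module.span_scale[OF module_fun_scale])

lemma fun_span_sum: "(\<And>i. i \<in> I \<Longrightarrow> f i \<in> fun_span X) \<Longrightarrow> sum f I \<in> fun_span X"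
  unfolding fun_span_def by (rule module.span_sum[OF module_fun_scale])

lemma fun_span_induct [consumes 1, case_names zero add scale base]:
  fixes f :: "'v list \<Rightarrow> 'a::field"
  assumes "f \<in> fun_span X" "P 0" "\<And>f g. P f \<Longrightarrow> P g \<Longrightarrow> P (f + g)"
    "\<And>c f. P f \<Longrightarrow> P (\<lambda>x. c * f x)" "\<And>f. f \<in> X \<Longrightarrow> P f"
  shows "P f"
proof -
  interpret m: module "\<lambda>c (f::'v list \<Rightarrow> 'a) x. c * f x" by (rule module_fun_scale)
  have "m.subspace (Collect P)" using assms(2-4) by (auto simp: m.subspace_def)
  then show ?thesis using m.span_induct[OF assms(1)[unfolded fun_span_def]] assms(5) by blast
qed

lemma fun_span_linear_image:
  fixes L :: "('v list \<Rightarrow> 'a::field) \<Rightarrow> 'w list \<Rightarrow> 'a"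
  assumes "f \<in> fun_span X" and "L 0 = 0" and "\<And>f g. L (f + g) = L f + L g"
    and "\<And>c f. L (\<lambda>x. c * f x) = (\<lambda>x. c * L f x)" and "\<And>f. f \<in> X \<Longrightarrow> L f \<in> fun_span Y"
  shows "L f \<in> fun_span Y"
  using assms(1)
proof (induct rule: fun_span_induct)
  case zero
  show ?case unfolding assms(2) by (rule fun_span_zero)
next
  case (add f g)
  then show ?case unfolding assms(3) by (rule fun_span_add)
next
  case (scale c f)
  then show ?case unfolding assms(4) by (rule fun_span_scale)
qed (rule assms(5))

section \<open>Homogeneous components and the tensor product\<close>

lemma sum_fun_apply: "(\<Sum>i\<in>I. f i) x = (\<Sum>i\<in>I. f i x)"
  by (induct I rule: infinite_finite_induct) auto

lemma hom_part_apply: "hom_part n f k = (if k = n then f else 0)"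
  by (simp add: hom_part_def)

lemma hom_part_zero: "hom_part k (0 :: 'v list \<Rightarrow> 'a::comm_ring_1) = 0"
  and hom_part_add: "hom_part k (f + g) = hom_part k f + hom_part k (g :: 'v list \<Rightarrow> 'a)"
  and hom_part_scale: "hom_part k (\<lambda>x. c * f x) = (\<lambda>k' vs. c * hom_part k f k' vs)"
  by (auto simp: hom_part_def fun_eq_iff)

lemma multilin_zero: "multilin s n 0"
  by (simp add: multilin_def)

lemma multilin_add: "multilin s n f \<Longrightarrow> multilin s n g \<Longrightarrow> multilin s n (f + g)"
  by (simp add: multilin_def algebra_simps)

lemma multilin_scale: "multilin s n f \<Longrightarrow> multilin s n (\<lambda>x. c * f x)"
  by (simp add: multilin_def algebra_simps)

lemma multilin_sum: "(\<And>i. i \<in> I \<Longrightarrow> multilin s n (f i)) \<Longrightarrow> multilin s n (\<Sum>i\<in>I. f i)"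
  by (induct I rule: infinite_finite_induct) (auto intro: multilin_zero multilin_add)

lemma multilin_0_eq: "multilin s 0 f \<Longrightarrow> f = (\<lambda>vs. if vs = [] then f [] else 0)"
  by (auto simp: multilin_def fun_eq_iff)

lemma multilin_perm_tensor:
  assumes \<sigma>: "\<sigma> permutes {..<n}" and f: "multilin s n f"
  shows "multilin s n (perm_tensor n \<sigma> f)"
  unfolding multilin_def
proof (intro conjI allI impI)
  fix vs :: "'b list"
  assume "length vs \<noteq> n"
  then show "perm_tensor n \<sigma> f vs = 0" by (simp add: perm_tensor_def)
next
  fix vs :: "'b list" and i c x y
  assume l: "length vs = n" and i: "i < n"
  have update: "map (\<lambda>j. vs[i := z] ! inv \<sigma> j) [0..<n] = (map (\<lambda>j. vs ! inv \<sigma> j) [0..<n])[\<sigma> i := z]"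
    for z
  proof (rule nth_equalityI)
    fix k
    assume "k < length (map (\<lambda>j. vs[i := z] ! inv \<sigma> j) [0..<n])"
    then have k: "k < n" by simp
    have "inv \<sigma> k < n" using permutes_in_image[OF permutes_inv[OF \<sigma>]] k by simp
    moreover have "inv \<sigma> k = i \<longleftrightarrow> \<sigma> i = k" using permutes_inv_eq[OF \<sigma>] by blast
    ultimately show "map (\<lambda>j. vs[i := z] ! inv \<sigma> j) [0..<n] ! k
        = (map (\<lambda>j. vs ! inv \<sigma> j) [0..<n])[\<sigma> i := z] ! k"
      using k l by (auto simp: nth_list_update)
  qed simp
  have "\<sigma> i < n" using permutes_in_image[OF \<sigma>] i by simp
  then show "perm_tensor n \<sigma> f (vs[i := s c x + y])
      = c * perm_tensor n \<sigma> f (vs[i := x]) + perm_tensor n \<sigma> f (vs[i := y])"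
    using l f unfolding perm_tensor_def multilin_def by (simp add: update)
qed

lemma tensor_algD: "t \<in> tensor_alg s \<Longrightarrow> multilin s n (t n)"
  by (simp add: tensor_alg_def)

lemma tensor_alg_bounded: "t \<in> tensor_alg s \<Longrightarrow> \<exists>N. \<forall>n>N. t n = 0"
  unfolding tensor_alg_def finite_nat_set_iff_bounded_le by (auto simp: not_le[symmetric])

lemma tensor_alg_hom_part: "multilin s n f \<Longrightarrow> hom_part n f \<in> tensor_alg s"
  unfolding tensor_alg_def by (auto simp: hom_part_apply multilin_zero intro: finite_subset[of _ "{n}"])

lemma tensor_alg_add:
  assumes "t \<in> tensor_alg s" "u \<in> tensor_alg s"
  shows "t + u \<in> tensor_alg s"
proof -
  have "{n. (t + u) n \<noteq> 0} \<subseteq> {n. t n \<noteq> 0} \<union> {n. u n \<noteq> 0}" by auto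
  then show ?thesis using assms unfolding tensor_alg_def by (auto intro: finite_subset multilin_add)
qed

lemma tensor_alg_scale:
  assumes "t \<in> tensor_alg s"
  shows "(\<lambda>k vs. c * t k vs) \<in> tensor_alg s"
proof -
  have "{n. (\<lambda>vs. c * t n vs) \<noteq> 0} \<subseteq> {n. t n \<noteq> 0}" by (auto simp: fun_eq_iff)
  then show ?thesis using assms unfolding tensor_alg_def by (auto intro: finite_subset multilin_scale)
qed

lemma tensor_alg_eq_sum_hom_part:
  assumes "\<forall>n>N. t n = 0"
  shows "t = (\<Sum>k\<le>N. hom_part k (t k))"
proof
  fix n
  have "(\<Sum>k\<le>N. hom_part k (t k)) n = (\<Sum>k\<le>N. if n = k then t n else 0)"
    by (simp add: sum_fun_apply hom_part_apply)
  then show "t n = (\<Sum>k\<le>N. hom_part k (t k)) n" using assms by (auto simp: not_le[symmetric])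
qed

definition join :: "nat \<Rightarrow> nat \<Rightarrow> ('v list \<Rightarrow> 'a::comm_ring_1) \<Rightarrow> ('v list \<Rightarrow> 'a) \<Rightarrow> 'v list \<Rightarrow> 'a" where
  "join i j f g = (\<lambda>vs. if length vs = i + j then f (take i vs) * g (drop i vs) else 0)"

lemma join_zero_left [simp]: "join i j 0 g = 0"
  and join_zero_right [simp]: "join i j f 0 = 0"
  and join_add_left: "join i j (f + f') g = join i j f g + join i j f' g"
  and join_add_right: "join i j f (g + g') = join i j f g + join i j f g'"
  and join_scale_left: "join i j (\<lambda>x. c * f x) g = (\<lambda>x. c * join i j f g x)"
  and join_scale_right: "join i j f (\<lambda>x. c * g x) = (\<lambda>x. c * join i j f g x)"
  by (auto simp: join_def fun_eq_iff algebra_simps)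

lemma tprod_eq_sum_join: "tprod t u k = (\<Sum>i\<le>k. join i (k - i) (t i) (u (k - i)))"
  by (auto simp: fun_eq_iff tprod_def join_def sum_fun_apply)

lemma tprod_hom_part: "tprod (hom_part a f) (hom_part b g) = hom_part (a + b) (join a b f g)"
proof
  fix k
  have "tprod (hom_part a f) (hom_part b g) k
      = (\<Sum>i\<le>k. if i = a then join a (k - a) f (hom_part b g (k - a)) else 0)"
    unfolding tprod_eq_sum_join by (rule sum.cong) (auto simp: hom_part_def)
  then show "tprod (hom_part a f) (hom_part b g) k = hom_part (a + b) (join a b f g) k"
    by (auto simp: hom_part_def)
qed

lemma multilin_join:
  assumes f: "multilin s i f" and g: "multilin s j g"
  shows "multilin s (i + j) (join i j f g)"
  unfolding multilin_def
proof (intro conjI allI impI)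
  fix vs :: "'b list"
  assume "length vs \<noteq> i + j"
  then show "join i j f g vs = 0" by (simp add: join_def)
next
  fix vs :: "'b list" and k c x y
  assume l: "length vs = i + j" and k: "k < i + j"
  show "join i j f g (vs[k := s c x + y]) = c * join i j f g (vs[k := x]) + join i j f g (vs[k := y])"
  proof (cases "k < i")
    case True
    then have "f ((take i vs)[k := s c x + y]) = c * f ((take i vs)[k := x]) + f ((take i vs)[k := y])"
      using f l unfolding multilin_def by auto
    then show ?thesis using True l by (simp add: join_def take_update_swap algebra_simps)
  next
    case False
    then have "g ((drop i vs)[k - i := s c x + y])
        = c * g ((drop i vs)[k - i := x]) + g ((drop i vs)[k - i := y])"
      using g l k unfolding multilin_def by auto
    then show ?thesis using False l by (simp add: join_def drop_update_swap algebra_simps)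
  qed
qed

lemma tensor_alg_tprod:
  assumes t: "t \<in> tensor_alg s" and u: "u \<in> tensor_alg s"
  shows "tprod t u \<in> tensor_alg s"
proof -
  have "multilin s k (join i (k - i) (t i) (u (k - i)))" if "i \<le> k" for i k
    using multilin_join[OF tensor_algD[OF t] tensor_algD[OF u], of i "k - i"] that by simp
  then have multilin: "multilin s k (tprod t u k)" for k
    unfolding tprod_eq_sum_join by (auto intro: multilin_sum)
  obtain N1 N2 where N1: "\<forall>n>N1. t n = 0" and N2: "\<forall>n>N2. u n = 0"
    using tensor_alg_bounded[OF t] tensor_alg_bounded[OF u] by blast
  have "join i (k - i) (t i) (u (k - i)) = 0" if "i \<le> k" "k > N1 + N2" for i k
    using N1 N2 that by (cases "i > N1") auto
  then have "{k. tprod t u k \<noteq> 0} \<subseteq> {..N1 + N2}"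
    unfolding tprod_eq_sum_join by (auto simp: not_le[symmetric])
  then show ?thesis using multilin finite_subset by (auto simp: tensor_alg_def)
qed

section \<open>Partition tensors\<close>

lemma symmetric_tensor_mset_eq:
  assumes "symmetric_tensor s m f" "length xs = m" "mset xs = mset ys"
  shows "f xs = f ys"
proof -
  obtain p where p: "p permutes {..<length ys}" "permute_list p ys = xs"
    using mset_eq_permutation[OF assms(3)] by blast
  have len: "length ys = m" using assms(2,3) mset_eq_length by metis
  then have "perm_tensor m (inv p) f ys = f ys"
    using assms(1) permutes_inv[OF p(1)] unfolding symmetric_tensor_def by auto
  moreover have "perm_tensor m (inv p) f ys = f xs"
    using p len by (simp add: perm_tensor_def permute_list_def inv_inv_eq permutes_bij)
  ultimately show ?thesis by simp
qed

definition block_factor :: "('v, 'a::comm_ring_1) tensor \<Rightarrow> 'v list \<Rightarrow> nat set \<Rightarrow> 'a" where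
  "block_factor \<tau> vs B = \<tau> (card B) (map ((!) vs) (sorted_list_of_set B))"

lemma part_tensor_eq_prod_block_factor:
  "length vs = n \<Longrightarrow> part_tensor \<tau> n P vs = (\<Prod>B\<in>P. block_factor \<tau> vs B)"
  by (simp add: part_tensor_def block_factor_def)

lemma block_factor_eq:
  assumes sym: "\<forall>n\<ge>1. symmetric_tensor s n (\<tau> n)"
    and B: "finite B" "B \<noteq> {}" and card: "card B = card C"
    and mset: "image_mset ((!) xs) (mset_set B) = image_mset ((!) ys) (mset_set C)"
  shows "block_factor \<tau> xs B = block_factor \<tau> ys C"
proof -
  have mset_sorted: "mset (sorted_list_of_set X) = mset_set X" for X :: "nat set"
    by (metis mset_sorted_list_of_multiset sorted_list_of_mset_set)
  have "card B \<ge> 1" using B by (simp add: Suc_le_eq card_gt_0_iff)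
  then have "symmetric_tensor s (card B) (\<tau> (card B))" using sym by auto
  then have "\<tau> (card B) (map ((!) xs) (sorted_list_of_set B))
      = \<tau> (card B) (map ((!) ys) (sorted_list_of_set C))"
    by (rule symmetric_tensor_mset_eq) (use mset in \<open>auto simp: mset_map mset_sorted\<close>)
  then show ?thesis using card by (simp add: block_factor_def)
qed

lemma block_factor_take: "B \<subseteq> {..<i} \<Longrightarrow> block_factor \<tau> (take i vs) B = block_factor \<tau> vs B"
  unfolding block_factor_def using finite_subset[of B "{..<i}"]
  by (auto intro!: arg_cong[where f="\<tau> _"] simp: subset_iff)

lemma block_factor_shift:
  assumes sym: "\<forall>n\<ge>1. symmetric_tensor s n (\<tau> n)"
    and B: "finite B" "B \<noteq> {}" and i: "i \<le> length vs"
  shows "block_factor \<tau> vs ((+) i ` B) = block_factor \<tau> (drop i vs) B"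
proof (rule block_factor_eq[OF sym finite_imageI[OF B(1)]])
  have "image_mset ((!) vs) (mset_set ((+) i ` B)) = image_mset (\<lambda>c. vs ! (i + c)) (mset_set B)"
    by (simp add: image_mset_mset_set[symmetric] image_mset.compositionality o_def)
  also have "\<dots> = image_mset ((!) (drop i vs)) (mset_set B)"
    by (rule image_mset_cong) (use i in simp)
  finally show "image_mset ((!) vs) (mset_set ((+) i ` B)) = image_mset ((!) (drop i vs)) (mset_set B)" .
qed (use B in \<open>auto simp: card_image\<close>)

lemma block_factor_image:
  assumes sym: "\<forall>n\<ge>1. symmetric_tensor s n (\<tau> n)"
    and f: "inj f" and B: "B \<subseteq> {..<n}" "B \<noteq> {}"
  shows "block_factor \<tau> vs (f ` B) = block_factor \<tau> (map (\<lambda>i. vs ! f i) [0..<n]) B"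
proof -
  have "finite B" using B(1) finite_subset by blast
  have "image_mset ((!) (map (\<lambda>i. vs ! f i) [0..<n])) (mset_set B) = image_mset (\<lambda>j. vs ! f j) (mset_set B)"
    by (rule image_mset_cong) (use B \<open>finite B\<close> in auto)
  also have "\<dots> = image_mset ((!) vs) (mset_set (f ` B))"
    using f by (simp add: image_mset_mset_set[symmetric] inj_on_subset image_mset.compositionality o_def)
  finally show ?thesis
    using block_factor_eq[OF sym finite_imageI[OF \<open>finite B\<close>]] f B(2)
    by (metis card_image image_is_empty inj_on_subset subset_UNIV)
qed

lemma partition_on_block: "partition_on A P \<Longrightarrow> B \<in> P \<Longrightarrow> B \<subseteq> A \<and> B \<noteq> {}"
  unfolding partition_on_def by blast

lemma partition_on_image_inj:
  assumes "partition_on A P" "inj_on f A"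
  shows "partition_on (f ` A) ((`) f ` P)"
proof -
  have "(`) f ` P - {{}} = (`) f ` P" using partition_onD3[OF assms(1)] by auto
  then show ?thesis using partition_on_inj_image[OF assms] by simp
qed

lemma partition_on_Un:
  "partition_on A P \<Longrightarrow> partition_on B Q \<Longrightarrow> A \<inter> B = {} \<Longrightarrow> partition_on (A \<union> B) (P \<union> Q)"
  unfolding partition_on_def disjoint_def pairwise_def disjnt_def by (auto; blast)

lemma partition_on_shift_Un:
  fixes i j :: nat
  assumes P: "partition_on {..<i} P" and Q: "partition_on {..<j} Q"
  shows "partition_on {..<i + j} (P \<union> (`) ((+) i) ` Q)"
proof -
  have "(+) i ` {..<j} = {i..<i + j}" by (simp add: lessThan_atLeast0 add.commute)
  then have "partition_on {i..<i + j} ((`) ((+) i) ` Q)"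
    using partition_on_image_inj[OF Q, of "(+) i"] by simp
  with P have "partition_on ({..<i} \<union> {i..<i + j}) (P \<union> (`) ((+) i) ` Q)"
    by (rule partition_on_Un) auto
  moreover have "{..<i} \<union> {i..<i + j} = {..<i + j}" by auto
  ultimately show ?thesis by simp
qed

lemma part_tensor_empty: "part_tensor \<tau> 0 {} = (\<lambda>vs. if vs = [] then 1 else 0)"
  by (auto simp: part_tensor_def fun_eq_iff)

lemma part_tensor_single:
  assumes "multilin s m (\<tau> m)"
  shows "part_tensor \<tau> m {{..<m}} = \<tau> m"
proof
  fix vs :: "'b list"
  show "part_tensor \<tau> m {{..<m}} vs = \<tau> m vs"
  proof (cases "length vs = m")
    case True
    then have "map ((!) vs) [0..<m] = vs" by (metis map_nth)
    then show ?thesis using True by (simp add: part_tensor_def lessThan_atLeast0)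
  next
    case False
    then show ?thesis using assms by (simp add: part_tensor_def multilin_def)
  qed
qed

lemma perm_tensor_part_tensor:
  assumes sym: "\<forall>n\<ge>1. symmetric_tensor s n (\<tau> n)" and \<sigma>: "\<sigma> permutes {..<n}"
    and P: "partition_on {..<n} P"
  shows "perm_tensor n \<sigma> (part_tensor \<tau> n P) = part_tensor \<tau> n ((`) (inv \<sigma>) ` P)"
proof
  fix vs :: "'b list"
  show "perm_tensor n \<sigma> (part_tensor \<tau> n P) vs = part_tensor \<tau> n ((`) (inv \<sigma>) ` P) vs"
  proof (cases "length vs = n")
    case False
    then show ?thesis by (simp add: perm_tensor_def part_tensor_def)
  next
    case True
    have inj: "inj (inv \<sigma>)" using permutes_inj[OF permutes_inv[OF \<sigma>]] .
    then have "inj_on ((`) (inv \<sigma>)) P" by (simp add: inj_on_def inj_image_eq_iff)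
    then have "part_tensor \<tau> n ((`) (inv \<sigma>) ` P) vs = (\<Prod>B\<in>P. block_factor \<tau> vs (inv \<sigma> ` B))"
      using True by (simp add: part_tensor_eq_prod_block_factor prod.reindex)
    also have "\<dots> = (\<Prod>B\<in>P. block_factor \<tau> (map (\<lambda>i. vs ! inv \<sigma> i) [0..<n]) B)"
      using block_factor_image[OF sym inj] partition_on_block[OF P] by (intro prod.cong) auto
    also have "\<dots> = perm_tensor n \<sigma> (part_tensor \<tau> n P) vs"
      using True by (simp add: perm_tensor_def part_tensor_eq_prod_block_factor)
    finally show ?thesis by simp
  qed
qed

lemma join_part_tensor:
  assumes sym: "\<forall>n\<ge>1. symmetric_tensor s n (\<tau> n)"
    and P: "partition_on {..<i} P" and Q: "partition_on {..<j} Q"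
  shows "join i j (part_tensor \<tau> i P) (part_tensor \<tau> j Q) = part_tensor \<tau> (i + j) (P \<union> (`) ((+) i) ` Q)"
proof
  fix vs :: "'b list"
  show "join i j (part_tensor \<tau> i P) (part_tensor \<tau> j Q) vs = part_tensor \<tau> (i + j) (P \<union> (`) ((+) i) ` Q) vs"
  proof (cases "length vs = i + j")
    case False
    then show ?thesis by (simp add: join_def part_tensor_def)
  next
    case True
    have "finite P" "finite Q" using finite_elements P Q by blast+
    have "P \<inter> (`) ((+) i) ` Q = {}"
    proof (rule ccontr)
      assume "P \<inter> (`) ((+) i) ` Q \<noteq> {}"
      then obtain C c where "C \<in> Q" "(+) i ` C \<in> P" "c \<in> C"
        using partition_on_block[OF Q] by blast
      then show False using partition_on_block[OF P] by fastforce
    qed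
    then have "part_tensor \<tau> (i + j) (P \<union> (`) ((+) i) ` Q) vs
        = (\<Prod>B\<in>P. block_factor \<tau> vs B) * (\<Prod>B\<in>(`) ((+) i) ` Q. block_factor \<tau> vs B)"
      using True prod.union_disjoint[OF \<open>finite P\<close> finite_imageI[OF \<open>finite Q\<close>]]
      by (simp add: part_tensor_eq_prod_block_factor)
    also have "(\<Prod>B\<in>(`) ((+) i) ` Q. block_factor \<tau> vs B) = (\<Prod>B\<in>Q. block_factor \<tau> vs ((+) i ` B))"
      using prod.reindex[of "(`) ((+) i)" Q] by (simp add: inj_on_def inj_image_eq_iff)
    also have "\<dots> = (\<Prod>B\<in>Q. block_factor \<tau> (drop i vs) B)"
    proof (rule prod.cong[OF refl])
      fix B
      assume "B \<in> Q"
      then have B: "B \<subseteq> {..<j}" "B \<noteq> {}" using partition_on_block[OF Q] by auto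
      show "block_factor \<tau> vs ((+) i ` B) = block_factor \<tau> (drop i vs) B"
        using block_factor_shift[OF sym finite_subset[OF B(1) finite_lessThan] B(2)] True by simp
    qed
    also have "(\<Prod>B\<in>P. block_factor \<tau> vs B) = (\<Prod>B\<in>P. block_factor \<tau> (take i vs) B)"
      using partition_on_block[OF P] by (intro prod.cong) (auto simp: block_factor_take)
    finally show ?thesis using True by (simp add: join_def part_tensor_eq_prod_block_factor)
  qed
qed

lemma permutes_lessThan_onto_final_segment:
  fixes n :: nat
  assumes B: "B \<subseteq> {..<n}"
  obtains \<rho> where "\<rho> permutes {..<n}" "bij_betw \<rho> {..<n - card B} ({..<n} - B)"
    "bij_betw \<rho> {n - card B..<n} B"
proof -
  define k where "k = n - card B"
  have "finite B" using B finite_subset by blast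
  have card: "card ({..<n} - B) = k" "card {k..<n} = card B"
    using B \<open>finite B\<close> card_mono[OF _ B] by (auto simp: card_Diff_subset k_def)
  obtain f1 where f1: "bij_betw f1 {..<k} ({..<n} - B)"
    using finite_same_card_bij[of "{..<k}" "{..<n} - B"] card by auto
  obtain f2 where f2: "bij_betw f2 {k..<n} B"
    using finite_same_card_bij[of "{k..<n}" B] card \<open>finite B\<close> by auto
  define \<rho> where "\<rho> x = (if x < k then f1 x else if x < n then f2 x else x)" for x
  have \<rho>1: "bij_betw \<rho> {..<k} ({..<n} - B)"
    using f1 by (rule bij_betw_cong[THEN iffD1, rotated]) (simp add: \<rho>_def)
  have \<rho>2: "bij_betw \<rho> {k..<n} B"
    using f2 by (rule bij_betw_cong[THEN iffD1, rotated]) (simp add: \<rho>_def)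
  have "bij_betw \<rho> ({..<k} \<union> {k..<n}) (({..<n} - B) \<union> B)"
    by (rule bij_betw_combine[OF \<rho>1 \<rho>2]) auto
  moreover have "{..<k} \<union> {k..<n} = {..<n}" "({..<n} - B) \<union> B = {..<n}"
    using B by (auto simp: k_def)
  ultimately have "bij_betw \<rho> {..<n} {..<n}" by simp
  then have "\<rho> permutes {..<n}" by (rule bij_imp_permutes) (auto simp: \<rho>_def k_def)
  then show ?thesis using that \<rho>1 \<rho>2 by (simp add: k_def)
qed

lemma partition_on_last_block:
  assumes P: "partition_on {..<n} P" and B: "B \<in> P"
  obtains \<rho> Q where "\<rho> permutes {..<n}" "partition_on {..<n - card B} Q"
    "P = (`) \<rho> ` (Q \<union> {{n - card B..<n}})"
proof -
  define k where "k = n - card B"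
  obtain \<rho> where \<rho>: "\<rho> permutes {..<n}" and \<rho>1: "bij_betw \<rho> {..<k} ({..<n} - B)"
    and \<rho>2: "bij_betw \<rho> {k..<n} B"
    using permutes_lessThan_onto_final_segment partition_on_block[OF P B] unfolding k_def by blast
  define Q where "Q = (`) (inv \<rho>) ` (P - {B})"
  have "disjnt B (\<Union>(P - {B}))"
    using partition_onD2[OF P] B unfolding disjoint_def pairwise_def disjnt_def by blast
  then have "partition_on ({..<n} - B) (P - {B})"
    using partition_on_insert P B by (metis insert_Diff)
  moreover have "inv \<rho> ` ({..<n} - B) = {..<k}"
    using \<rho>1 permutes_inj[OF \<rho>] by (metis bij_betw_def image_inv_f_f)
  ultimately have "partition_on {..<k} Q"
    unfolding Q_def using partition_on_image_inj permutes_inj[OF permutes_inv[OF \<rho>]]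
    by (metis inj_on_subset subset_UNIV)
  moreover have "P = (`) \<rho> ` (Q \<union> {{k..<n}})"
    using \<rho>2 B permutes_surj[OF \<rho>] unfolding Q_def bij_betw_def
    by (auto simp: image_image surj_f_inv_f image_Un)
  ultimately show ?thesis using that \<rho> by (simp add: k_def)
qed

section \<open>The span of the partition tensors\<close>

definition part_tensors :: "('v, 'a::comm_ring_1) tensor \<Rightarrow> nat \<Rightarrow> ('v list \<Rightarrow> 'a) set" where
  "part_tensors \<tau> n = {part_tensor \<tau> n P | P. partition_on {..<n} P}"

definition partition_span_alg :: "('a::field \<Rightarrow> 'v::ab_group_add \<Rightarrow> 'v) \<Rightarrow> ('v, 'a) tensor \<Rightarrow> ('v, 'a) tensor set" where
  "partition_span_alg s \<tau> = {t \<in> tensor_alg s. \<forall>n\<ge>1. t n \<in> fun_span (part_tensors \<tau> n)}"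

lemma multilin_0_in_span_part_tensors:
  assumes "multilin s 0 f"
  shows "f \<in> fun_span (part_tensors \<tau> 0)"
proof -
  have "part_tensor \<tau> 0 {} \<in> part_tensors \<tau> 0"
    by (auto simp: part_tensors_def partition_on_empty)
  then have "(\<lambda>x. f [] * part_tensor \<tau> 0 {} x) \<in> fun_span (part_tensors \<tau> 0)"
    by (intro fun_span_scale fun_span_base)
  moreover have "(\<lambda>x. f [] * part_tensor \<tau> 0 {} x) = f"
    by (subst (2) multilin_0_eq[OF assms]) (auto simp: part_tensor_empty)
  ultimately show ?thesis by simp
qed

lemma partition_span_alg_component:
  "t \<in> partition_span_alg s \<tau> \<Longrightarrow> t n \<in> fun_span (part_tensors \<tau> n)"
  using multilin_0_in_span_part_tensors[OF tensor_algD]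
  by (cases n) (auto simp: partition_span_alg_def)

lemma perm_tensor_in_span_part_tensors:
  assumes sym: "\<forall>n\<ge>1. symmetric_tensor s n (\<tau> n)" and \<sigma>: "\<sigma> permutes {..<n}"
    and f: "f \<in> fun_span (part_tensors \<tau> n)"
  shows "perm_tensor n \<sigma> f \<in> fun_span (part_tensors \<tau> n)"
  using f
proof (rule fun_span_linear_image)
  fix g
  assume "g \<in> part_tensors \<tau> n"
  then obtain P where P: "partition_on {..<n} P" and g: "g = part_tensor \<tau> n P"
    by (auto simp: part_tensors_def)
  have "partition_on {..<n} ((`) (inv \<sigma>) ` P)"
    using partition_on_image_inj[OF P, of "inv \<sigma>"] permutes_inv[OF \<sigma>]
    by (metis permutes_image permutes_inj inj_on_subset subset_UNIV)
  then show "perm_tensor n \<sigma> g \<in> fun_span (part_tensors \<tau> n)"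
    unfolding g perm_tensor_part_tensor[OF sym \<sigma> P] part_tensors_def by (blast intro: fun_span_base)
qed (auto simp: perm_tensor_def fun_eq_iff)

lemma join_in_span_part_tensors:
  assumes sym: "\<forall>n\<ge>1. symmetric_tensor s n (\<tau> n)"
    and f: "f \<in> fun_span (part_tensors \<tau> i)" and g: "g \<in> fun_span (part_tensors \<tau> j)"
  shows "join i j f g \<in> fun_span (part_tensors \<tau> (i + j))"
  using f
proof (rule fun_span_linear_image[where L = "\<lambda>f. join i j f g"])
  fix f
  assume "f \<in> part_tensors \<tau> i"
  then obtain P where P: "partition_on {..<i} P" and f: "f = part_tensor \<tau> i P"
    by (auto simp: part_tensors_def)
  show "join i j f g \<in> fun_span (part_tensors \<tau> (i + j))"
    using g
  proof (rule fun_span_linear_image[where L = "join i j f"])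
    fix g
    assume "g \<in> part_tensors \<tau> j"
    then obtain Q where Q: "partition_on {..<j} Q" and g: "g = part_tensor \<tau> j Q"
      by (auto simp: part_tensors_def)
    show "join i j f g \<in> fun_span (part_tensors \<tau> (i + j))"
      unfolding f g join_part_tensor[OF sym P Q] part_tensors_def
      using partition_on_shift_Un[OF P Q] by (blast intro: fun_span_base)
  qed (simp_all add: join_add_right join_scale_right)
qed (simp_all add: join_add_left join_scale_left)

lemma hom_part_in_partition_span_alg:
  assumes "symmetric_tensor s n (\<tau> n)" "n \<ge> 1"
  shows "hom_part n (\<tau> n) \<in> partition_span_alg s \<tau>"
proof -
  have "multilin s n (\<tau> n)" using assms(1) by (simp add: symmetric_tensor_def)
  moreover have "partition_on {..<n} {{..<n}}"
    using assms(2) by (intro partition_on_space) (auto simp: lessThan_empty_iff)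
  ultimately have "\<tau> n \<in> part_tensors \<tau> n"
    unfolding part_tensors_def by (metis (mono_tags) mem_Collect_eq part_tensor_single)
  then show ?thesis using \<open>multilin s n (\<tau> n)\<close>
    by (auto simp: partition_span_alg_def tensor_alg_hom_part hom_part_apply fun_span_zero
        intro: fun_span_base)
qed

lemma perm_inv_subalg_partition_span_alg:
  assumes sym: "\<forall>n\<ge>1. symmetric_tensor s n (\<tau> n)"
  shows "perm_inv_subalg s (partition_span_alg s \<tau>)"
  unfolding perm_inv_subalg_def graded_subalg_def unital_subalg_def
proof (intro conjI allI ballI impI)
  fix c :: 'a
  have "multilin s 0 (\<lambda>vs. if vs = [] then c else 0)" by (auto simp: multilin_def)
  then show "scalar_tensor c \<in> partition_span_alg s \<tau>"
    by (auto simp: partition_span_alg_def scalar_tensor_def tensor_alg_hom_part hom_part_apply fun_span_zero)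
next
  fix t u
  assume t: "t \<in> partition_span_alg s \<tau>" and u: "u \<in> partition_span_alg s \<tau>"
  then show "t + u \<in> partition_span_alg s \<tau>"
    by (auto simp: partition_span_alg_def intro: fun_span_add tensor_alg_add)
  have "join i (n - i) (t i) (u (n - i)) \<in> fun_span (part_tensors \<tau> n)" if "i \<le> n" for i n
    using join_in_span_part_tensors[OF sym partition_span_alg_component[OF t]
        partition_span_alg_component[OF u], of i "n - i"] that by simp
  then show "tprod t u \<in> partition_span_alg s \<tau>"
    using t u unfolding partition_span_alg_def tprod_eq_sum_join
    by (auto intro: fun_span_sum tensor_alg_tprod[unfolded tprod_eq_sum_join])
next
  fix c :: 'a and t
  assume "t \<in> partition_span_alg s \<tau>"
  then show "(\<lambda>k vs. c * t k vs) \<in> partition_span_alg s \<tau>"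
    by (auto simp: partition_span_alg_def intro: fun_span_scale tensor_alg_scale)
next
  fix t n
  assume "t \<in> partition_span_alg s \<tau>"
  then show "hom_part n (t n) \<in> partition_span_alg s \<tau>"
    by (auto simp: partition_span_alg_def hom_part_apply tensor_alg_hom_part tensor_algD fun_span_zero)
next
  fix n f \<sigma>
  assume f: "hom_part n f \<in> partition_span_alg s \<tau>" and \<sigma>: "\<sigma> permutes {..<n}"
  have "multilin s n f" using tensor_algD[of "hom_part n f" s n] f
    by (simp add: partition_span_alg_def hom_part_apply)
  moreover have "f \<in> fun_span (part_tensors \<tau> n)"
    using partition_span_alg_component[OF f, of n] by (simp add: hom_part_apply)
  ultimately show "hom_part n (perm_tensor n \<sigma> f) \<in> partition_span_alg s \<tau>"
    using tensor_alg_hom_part[OF multilin_perm_tensor[OF \<sigma>]] perm_tensor_in_span_part_tensors[OF sym \<sigma>]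
    by (auto simp: partition_span_alg_def hom_part_apply fun_span_zero)
qed (auto simp: partition_span_alg_def)

section \<open>Partition tensors in permutation invariant subalgebras\<close>

lemma perm_inv_subalgD:
  fixes A :: "('v::ab_group_add, 'a::field) tensor set"
  assumes "perm_inv_subalg s A"
  shows perm_inv_subalg_scalar: "scalar_tensor c \<in> A"
    and perm_inv_subalg_zero: "0 \<in> A"
    and perm_inv_subalg_add: "t \<in> A \<Longrightarrow> u \<in> A \<Longrightarrow> t + u \<in> A"
    and perm_inv_subalg_scale: "t \<in> A \<Longrightarrow> (\<lambda>k vs. c * t k vs) \<in> A"
    and perm_inv_subalg_tprod: "t \<in> A \<Longrightarrow> u \<in> A \<Longrightarrow> tprod t u \<in> A"
    and perm_inv_subalg_perm:
      "hom_part n f \<in> A \<Longrightarrow> \<sigma> permutes {..<n} \<Longrightarrow> hom_part n (perm_tensor n \<sigma> f) \<in> A"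
proof -
  have sub: "unital_subalg s A"
    using assms by (simp add: perm_inv_subalg_def graded_subalg_def)
  then show scalar: "scalar_tensor c \<in> A" for c
    by (simp add: unital_subalg_def)
  have "scalar_tensor 0 = (0 :: ('v, 'a) tensor)"
    by (auto simp: scalar_tensor_def hom_part_def fun_eq_iff)
  then show "0 \<in> A" using scalar[of 0] by simp
  show "t \<in> A \<Longrightarrow> u \<in> A \<Longrightarrow> t + u \<in> A" "t \<in> A \<Longrightarrow> (\<lambda>k vs. c * t k vs) \<in> A"
    "t \<in> A \<Longrightarrow> u \<in> A \<Longrightarrow> tprod t u \<in> A"
    using sub by (simp_all add: unital_subalg_def)
  show "hom_part n f \<in> A \<Longrightarrow> \<sigma> permutes {..<n} \<Longrightarrow> hom_part n (perm_tensor n \<sigma> f) \<in> A"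
    using assms by (simp add: perm_inv_subalg_def)
qed

lemma perm_inv_subalg_sum:
  assumes "perm_inv_subalg s A" "\<And>i. i \<in> I \<Longrightarrow> t i \<in> A"
  shows "(\<Sum>i\<in>I. t i) \<in> A"
  using assms(2)
  by (induct I rule: infinite_finite_induct)
    (auto intro: perm_inv_subalg_zero[OF assms(1)] perm_inv_subalg_add[OF assms(1)])

lemma part_tensor_mem_perm_inv_subalg:
  assumes sym: "\<forall>n\<ge>1. symmetric_tensor s n (\<tau> n)"
    and A: "perm_inv_subalg s A" and gen: "\<forall>n\<ge>1. hom_part n (\<tau> n) \<in> A"
  shows "partition_on {..<n} P \<Longrightarrow> hom_part n (part_tensor \<tau> n P) \<in> A"
proof (induction n arbitrary: P rule: less_induct)
  case (less n P)
  show ?case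
  proof (cases "P = {}")
    case True
    then have "n = 0" using partition_onD1[OF less.prems] by auto
    then have "hom_part n (part_tensor \<tau> n P) = scalar_tensor 1"
      using \<open>P = {}\<close> by (auto simp: part_tensor_def scalar_tensor_def hom_part_def fun_eq_iff)
    then show ?thesis using perm_inv_subalg_scalar[OF A] by simp
  next
    case False
    then obtain B where B: "B \<in> P" by blast
    define m k where "m = card B" and "k = n - card B"
    obtain \<rho> Q where \<rho>: "\<rho> permutes {..<n}" and Q: "partition_on {..<k} Q"
      and P: "P = (`) \<rho> ` (Q \<union> {{k..<n}})"
      using partition_on_last_block[OF less.prems B] by (metis k_def)
    have Bs: "B \<subseteq> {..<n}" "B \<noteq> {}" using partition_on_block[OF less.prems B] by auto
    then have "1 \<le> m" "m \<le> n"
      using finite_subset[OF Bs(1)] card_mono[OF _ Bs(1)] by (auto simp: m_def Suc_le_eq card_gt_0_iff)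
    then have kn: "k < n" "n = k + m" by (auto simp: k_def m_def)
    then have shift: "(`) ((+) k) ` {{..<m}} = {{k..<n}}"
      by (simp add: lessThan_atLeast0 add.commute)
    have single: "partition_on {..<m} {{..<m}}"
      using \<open>1 \<le> m\<close> by (intro partition_on_space) (auto simp: lessThan_empty_iff)
    have "hom_part m (part_tensor \<tau> m {{..<m}}) \<in> A"
      using gen \<open>1 \<le> m\<close> part_tensor_single[of s m \<tau>] sym by (simp add: symmetric_tensor_def)
    with less.IH[OF kn(1) Q]
    have "tprod (hom_part k (part_tensor \<tau> k Q)) (hom_part m (part_tensor \<tau> m {{..<m}})) \<in> A"
      by (rule perm_inv_subalg_tprod[OF A])
    then have "hom_part n (part_tensor \<tau> n (Q \<union> {{k..<n}})) \<in> A"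
      using join_part_tensor[OF sym Q single] kn shift by (simp add: tprod_hom_part)
    moreover have "partition_on {..<n} (Q \<union> {{k..<n}})"
      using partition_on_shift_Un[OF Q single] kn shift by simp
    ultimately show ?thesis
      using perm_inv_subalg_perm[OF A _ permutes_inv[OF \<rho>]]
        perm_tensor_part_tensor[OF sym permutes_inv[OF \<rho>]] inv_inv_eq[OF permutes_bij[OF \<rho>]] P
      by metis
  qed
qed

lemma partition_span_alg_subset_perm_inv_subalg:
  assumes sym: "\<forall>n\<ge>1. symmetric_tensor s n (\<tau> n)"
    and A: "perm_inv_subalg s A" and gen: "\<forall>n\<ge>1. hom_part n (\<tau> n) \<in> A"
  shows "partition_span_alg s \<tau> \<subseteq> A"
proof
  fix t
  assume t: "t \<in> partition_span_alg s \<tau>"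
  have "hom_part k f \<in> A" if "f \<in> fun_span (part_tensors \<tau> k)" for k f
    using that
  proof (induct rule: fun_span_induct)
    case zero
    show ?case unfolding hom_part_zero by (rule perm_inv_subalg_zero[OF A])
  next
    case (add f g)
    then show ?case unfolding hom_part_add by (rule perm_inv_subalg_add[OF A])
  next
    case (scale c f)
    then show ?case unfolding hom_part_scale by (rule perm_inv_subalg_scale[OF A])
  next
    case (base f)
    then show ?case using part_tensor_mem_perm_inv_subalg[OF sym A gen] by (auto simp: part_tensors_def)
  qed
  then have "hom_part k (t k) \<in> A" for k using partition_span_alg_component[OF t] by blast
  moreover obtain N where "\<forall>n>N. t n = 0"
    using t tensor_alg_bounded[of t s] by (auto simp: partition_span_alg_def)
  ultimately show "t \<in> A"
    using tensor_alg_eq_sum_hom_part perm_inv_subalg_sum[OF A] by metis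
qed

theorem proposition2p9:
  fixes scale :: "'a::field \<Rightarrow> 'v::ab_group_add \<Rightarrow> 'v"
    and \<tau> :: "('v, 'a) tensor"
  assumes "vector_space scale"
    and "\<forall>n\<ge>1. symmetric_tensor scale n (\<tau> n)"
  shows "A_perm scale {hom_part n (\<tau> n) | n. n \<ge> 1} =
    {t \<in> tensor_alg scale. \<forall>n\<ge>1. t n \<in> fun_span {part_tensor \<tau> n P | P. partition_on {..<n} P}}"
proof -
  have "{hom_part n (\<tau> n) | n. n \<ge> 1} \<subseteq> partition_span_alg scale \<tau>"
    using hom_part_in_partition_span_alg assms(2) by blast
  then have "A_perm scale {hom_part n (\<tau> n) | n. n \<ge> 1} \<subseteq> partition_span_alg scale \<tau>"
    unfolding A_perm_def using perm_inv_subalg_partition_span_alg[OF assms(2)] by (intro Inter_lower) blast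
  moreover have "partition_span_alg scale \<tau> \<subseteq> A_perm scale {hom_part n (\<tau> n) | n. n \<ge> 1}"
    unfolding A_perm_def using partition_span_alg_subset_perm_inv_subalg[OF assms(2)]
    by (intro Inter_greatest) blast
  ultimately show ?thesis by (simp add: partition_span_alg_def part_tensors_def)
qed

end
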